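(* Assume $\nabla f$ is $L$-Lipschitz, and consider the SAM flow at a point where not all $g_k$ vanish. Then the Norm Deviation $Q$ satisfies $$\frac{dQ}{dt}=4\rho u K\cdot\mathrm{Cov}\big(\|\mathcal G_k\|_F^2,\|g_k\|_F^2\big)+R,$$ where there is a constant $C$ depending only on $\Phi$, $K$, $L$, the Frobenius norms of the current cores and $\|\nabla f(\mathcal T)\|_F$ (with $\mathcal T=\Phi(\mathcal G_1,\ldots,\mathcal G_K)$) such that $|R|\le C\rho^2$ for all $\rho\in(0,1]$.
   Context: Let $K\ge 2$. For each $k\in[K]$ let $V_k$ be a finite-dimensional real space of tensors with Frobenius inner product $\langle\cdot,\cdot\rangle_F$ and norm $\|\cdot\|_F$; $[K]=\{1,\ldots,K\}$. Let $\Phi:V_1\times\cdots\times V_K\to\mathbb R^{n_1\times\cdots\times n_d}$ be multilinear, $f:\mathbb R^{n_1\times\cdots\times n_d}\to\mathbb R$ continuously differentiable with $\|\nabla f(\mathcal X)-\nabla f(\mathcal Y)\|_F\le L\|\mathcal X-\mathcal Y\|_F$ for all $\mathcal X,\mathcal Y$, and $F:=f\circ\Phi$. SAM gradient flow with radius $\rho>0$: at a point $(\mathcal G_1,\ldots,\mathcal G_K)$ let $g_k=\nabla_{\mathcal G_k}F(\mathcal G_1,\ldots,\mathcal G_K)$, $u=(\sum_{j=1}^K\|g_j\|_F^2)^{-1/2}$ (requiring not all $g_j=0$), $\tilde{\mathcal G}_k=\mathcal G_k+\rho u g_k$, $\tilde g_k=\nabla_{\mathcal G_k}F(\tilde{\mathcal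 G}_1,\ldots,\tilde{\mathcal G}_K)$; the SAM flow is $\frac{d}{dt}\mathcal G_k=-\tilde g_k$ for all $k$, and time derivatives are along this flow. The Norm Deviation is $Q:=\sum_{k=1}^K\big(\|\mathcal G_k\|_F^2-\frac1K\sum_{i=1}^K\|\mathcal G_i\|_F^2\big)^2$. The empirical covariance is $\mathrm{Cov}(x_k,y_k):=\frac1K\sum_{k=1}^K(x_k-\bar x)(y_k-\bar y)$ with $\bar x,\bar y$ the means over $k\in[K]$. *)

theory Defs
  imports "HOL-Analysis.Analysis"
begin

text \<open>A point (G_1,...,G_K) of V_1 x ... x V_K is an element of type 'v ^ 'k, where the
  finite index type 'k plays the role of [K] (K = CARD('k)) and each core space V_k is a
  linear subspace V k of a common Euclidean space 'v (Frobenius inner product = inner product).\<close>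

definition vupd :: "'v ^ 'k \<Rightarrow> 'k \<Rightarrow> 'v \<Rightarrow> 'v ^ 'k" where
  "vupd G k x = (\<chi> j. if j = k then x else G $ j)"

definition in_cores :: "('k \<Rightarrow> 'v set) \<Rightarrow> 'v ^ 'k \<Rightarrow> bool" where
  "in_cores V G \<longleftrightarrow> (\<forall>j. G $ j \<in> V j)"

definition multilinear_on :: "('k \<Rightarrow> 'v::real_vector set) \<Rightarrow> ('v ^ 'k \<Rightarrow> 'w::real_vector) \<Rightarrow> bool" where
  "multilinear_on V \<Phi> \<longleftrightarrow>
     (\<forall>G k. in_cores V G \<longrightarrow>
        (\<forall>x\<in>V k. \<forall>y\<in>V k. \<forall>a b::real.
           \<Phi> (vupd G k (a *\<^sub>R x + b *\<^sub>R y)) = a *\<^sub>R \<Phi> (vupd G k x) + b *\<^sub>R \<Phi> (vupd G k y)))"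

definition pgrad :: "('k \<Rightarrow> 'v::real_inner set) \<Rightarrow> ('v ^ 'k \<Rightarrow> real) \<Rightarrow> 'v ^ 'k \<Rightarrow> 'k \<Rightarrow> 'v" where
  "pgrad V F G k = (THE g. g \<in> V k \<and>
      ((\<lambda>h. F (vupd G k (G $ k + h))) has_derivative (\<lambda>h. g \<bullet> h)) (at 0 within V k))"

definition sam_u :: "('k::finite \<Rightarrow> 'v::real_inner set) \<Rightarrow> ('v ^ 'k \<Rightarrow> real) \<Rightarrow> 'v ^ 'k \<Rightarrow> real" where
  "sam_u V F G = 1 / sqrt (\<Sum>j\<in>UNIV. (norm (pgrad V F G j))\<^sup>2)"

definition sam_pert :: "('k::finite \<Rightarrow> 'v::real_inner set) \<Rightarrow> ('v ^ 'k \<Rightarrow> real) \<Rightarrow> real \<Rightarrow> 'v ^ 'k \<Rightarrow> 'v ^ 'k" where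
  "sam_pert V F \<rho> G = (\<chi> k. G $ k + (\<rho> * sam_u V F G) *\<^sub>R pgrad V F G k)"

definition sam_vel :: "('k::finite \<Rightarrow> 'v::real_inner set) \<Rightarrow> ('v ^ 'k \<Rightarrow> real) \<Rightarrow> real \<Rightarrow> 'v ^ 'k \<Rightarrow> 'v ^ 'k" where
  "sam_vel V F \<rho> G = (\<chi> k. - pgrad V F (sam_pert V F \<rho> G) k)"

definition norm_dev :: "'v::real_normed_vector ^ 'k::finite \<Rightarrow> real" where
  "norm_dev G = (\<Sum>k\<in>UNIV. ((norm (G $ k))\<^sup>2 - (1 / real CARD('k)) * (\<Sum>i\<in>UNIV. (norm (G $ i))\<^sup>2))\<^sup>2)"

definition emp_mean :: "('k::finite \<Rightarrow> real) \<Rightarrow> real" where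
  "emp_mean x = (1 / real CARD('k)) * (\<Sum>k\<in>UNIV. x k)"

definition emp_cov :: "('k::finite \<Rightarrow> real) \<Rightarrow> ('k \<Rightarrow> real) \<Rightarrow> real" where
  "emp_cov x y = (1 / real CARD('k)) * (\<Sum>k\<in>UNIV. (x k - emp_mean x) * (y k - emp_mean y))"

end

theory Submission
  imports Defs
begin

(* Along the flow, d/dt |G_k|^2 = -2 <G_k, g~_k>, and the deviations |G_k|^2 - mean sum to zero,
   so dQ/dt = -4 sum_k (|G_k|^2 - mean) <G_k, g~_k>.  Write G_k = G~_k - rho u g_k.  By Euler's
   identity for the multilinear map Phi, <G~_k, g~_k> = <grad f (Phi G~), Phi G~> does not depend on
   k, so it drops out of the centred sum, leaving
     4 rho u sum_k (|G_k|^2 - mean) <g_k, g~_k>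
       = 4 rho u K Cov(|G_k|^2, |g_k|^2) + 4 rho u sum_k (|G_k|^2 - mean) <g_k, g~_k - g_k>.
   The perturbation moves each core by at most rho, Phi is bounded by M prod_i |G_i| on the cores,
   and grad f is L-Lipschitz, so |g~_k - g_k| = O(rho); with u |g_k| <= 1 the remainder is
   O(rho^2). *)

lemma vupd_nth [simp]: "vupd G k x $ j = (if j = k then x else G $ j)"
  by (simp add: vupd_def)

lemma vupd_same [simp]: "vupd G k (G $ k) = G"
  by (simp add: vec_eq_iff)

lemma in_coresD: "in_cores V G \<Longrightarrow> G $ k \<in> V k"
  by (simp add: in_cores_def)

lemma in_cores_vupd: "in_cores V G \<Longrightarrow> x \<in> V k \<Longrightarrow> in_cores V (vupd G k x)"
  by (simp add: in_cores_def)

subsection \<open>Multilinear maps on products of subspaces\<close>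

lemma multilinear_onD:
  assumes "multilinear_on V \<Phi>" "in_cores V G" "x \<in> V k" "y \<in> V k"
  shows "\<Phi> (vupd G k (a *\<^sub>R x + b *\<^sub>R y)) = a *\<^sub>R \<Phi> (vupd G k x) + b *\<^sub>R \<Phi> (vupd G k y)"
  using assms unfolding multilinear_on_def by blast

lemma multilinear_on_zero:
  assumes "multilinear_on V \<Phi>" "in_cores V G"
  shows "\<Phi> (vupd G k 0) = 0"
  using multilinear_onD[OF assms in_coresD[OF assms(2)] in_coresD[OF assms(2)], of k 0 0] by simp

lemma multilinear_on_add:
  assumes "multilinear_on V \<Phi>" "in_cores V G" "x \<in> V k" "y \<in> V k"
  shows "\<Phi> (vupd G k (x + y)) = \<Phi> (vupd G k x) + \<Phi> (vupd G k y)"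
  using multilinear_onD[OF assms, of 1 1] by simp

lemma multilinear_on_diff:
  assumes "multilinear_on V \<Phi>" "in_cores V G" "x \<in> V k" "y \<in> V k"
  shows "\<Phi> (vupd G k (x - y)) = \<Phi> (vupd G k x) - \<Phi> (vupd G k y)"
  using multilinear_onD[OF assms, of 1 "-1"] by simp

lemma multilinear_on_sum:
  assumes "subspace (V k)" "multilinear_on V \<Phi>" "in_cores V G" "finite A" "A \<subseteq> V k"
  shows "\<Phi> (vupd G k (\<Sum>b\<in>A. c b *\<^sub>R b)) = (\<Sum>b\<in>A. c b *\<^sub>R \<Phi> (vupd G k b))"
  using assms(4,5)
proof (induction A rule: finite_induct)
  case empty
  then show ?case using multilinear_on_zero[OF assms(2,3)] by simp
next
  case (insert x A)
  have "(\<Sum>b\<in>A. c b *\<^sub>R b) \<in> V k"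
    using insert.prems assms(1) by (meson insert_subset subsetD subspace_scale subspace_sum)
  then show ?case
    using insert multilinear_onD[OF assms(2,3), of x k _ "c x" 1] by simp
qed

definition orthonormal_basis_of :: "'v::real_inner set \<Rightarrow> 'v set \<Rightarrow> bool" where
  "orthonormal_basis_of B S \<longleftrightarrow>
     B \<subseteq> S \<and> pairwise orthogonal B \<and> (\<forall>b\<in>B. norm b = 1) \<and> finite B \<and> span B = S"

lemma orthonormal_basis_of_exists:
  fixes S :: "'v::euclidean_space set"
  assumes "subspace S"
  shows "\<exists>B. orthonormal_basis_of B S"
  using orthonormal_basis_subspace[OF assms] independent_imp_finite
  unfolding orthonormal_basis_of_def by metis

lemma orthonormal_basis_of_expand:
  assumes "orthonormal_basis_of B S" "x \<in> S"
  shows "x = (\<Sum>b\<in>B. (b \<bullet> x) *\<^sub>R b)"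
  using orthonormal_basis_expand[of B x] assms
  by (auto simp: orthonormal_basis_of_def inner_commute)

lemma multilinear_on_expand:
  assumes "subspace (V k)" "multilinear_on V \<Phi>" "in_cores V G"
    and B: "orthonormal_basis_of B (V k)" and h: "h \<in> V k"
  shows "\<Phi> (vupd G k h) = (\<Sum>b\<in>B. (b \<bullet> h) *\<^sub>R \<Phi> (vupd G k b))"
proof -
  have "\<Phi> (vupd G k h) = \<Phi> (vupd G k (\<Sum>b\<in>B. (b \<bullet> h) *\<^sub>R b))"
    using orthonormal_basis_of_expand[OF B h] by simp
  also have "\<dots> = (\<Sum>b\<in>B. (b \<bullet> h) *\<^sub>R \<Phi> (vupd G k b))"
    using B by (intro multilinear_on_sum[OF assms(1-3)]) (auto simp: orthonormal_basis_of_def)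
  finally show ?thesis .
qed

lemma norm_multilinear_on_le_basis:
  assumes "subspace (V k)" "multilinear_on V \<Phi>" "in_cores V H"
    and B: "orthonormal_basis_of B (V k)"
  shows "norm (\<Phi> H) \<le> norm (H $ k) * (\<Sum>b\<in>B. norm (\<Phi> (vupd H k b)))"
proof -
  have "\<Phi> H = (\<Sum>b\<in>B. (b \<bullet> H $ k) *\<^sub>R \<Phi> (vupd H k b))"
    using multilinear_on_expand[OF assms in_coresD[OF assms(3)]] by simp
  also have "norm \<dots> \<le> (\<Sum>b\<in>B. \<bar>b \<bullet> H $ k\<bar> * norm (\<Phi> (vupd H k b)))"
    by (rule order_trans[OF norm_sum]) simp
  also have "\<dots> \<le> (\<Sum>b\<in>B. norm (H $ k) * norm (\<Phi> (vupd H k b)))"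
  proof (intro sum_mono mult_right_mono)
    fix b assume "b \<in> B"
    then show "\<bar>b \<bullet> H $ k\<bar> \<le> norm (H $ k)"
      using Cauchy_Schwarz_ineq2[of b "H $ k"] B by (simp add: orthonormal_basis_of_def)
  qed simp
  finally show ?thesis by (simp add: sum_distrib_left)
qed

lemma multilinear_on_bounded_partial:
  fixes V :: "'k::finite \<Rightarrow> 'v::euclidean_space set" and \<Phi> :: "'v ^ 'k \<Rightarrow> 'w::real_normed_vector"
  assumes subsp: "\<forall>k. subspace (V k)" and ml: "multilinear_on V \<Phi>" and "finite S"
  shows "\<exists>M\<ge>0. \<forall>H. in_cores V H \<and> (\<forall>j. j \<notin> S \<longrightarrow> H $ j = E $ j) \<longrightarrow>
           norm (\<Phi> H) \<le> M * (\<Prod>j\<in>S. norm (H $ j))"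
  using \<open>finite S\<close>
proof (induction S arbitrary: E rule: finite_induct)
  case empty
  have "H = E" if "\<forall>j. H $ j = E $ j" for H :: "'v ^ 'k"
    using that by (simp add: vec_eq_iff)
  then show ?case by (intro exI[of _ "norm (\<Phi> E)"]) auto
next
  case (insert k S)
  obtain B where B: "orthonormal_basis_of B (V k)"
    using orthonormal_basis_of_exists subsp by blast
  have "\<forall>b. \<exists>M. M \<ge> 0 \<and> (\<forall>H. in_cores V H \<and> (\<forall>j. j \<notin> S \<longrightarrow> H $ j = vupd E k b $ j) \<longrightarrow>
      norm (\<Phi> H) \<le> M * (\<Prod>j\<in>S. norm (H $ j)))"
    using insert.IH by blast
  then obtain Mb where Mb0: "\<And>b. Mb b \<ge> 0" and Mb: "\<And>b H. in_cores V H \<Longrightarrow>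
      (\<forall>j. j \<notin> S \<longrightarrow> H $ j = vupd E k b $ j) \<Longrightarrow> norm (\<Phi> H) \<le> Mb b * (\<Prod>j\<in>S. norm (H $ j))"
    by (auto dest!: choice)
  have "norm (\<Phi> H) \<le> (\<Sum>b\<in>B. Mb b) * (\<Prod>j\<in>insert k S. norm (H $ j))"
    if H: "in_cores V H" and HE: "\<forall>j. j \<notin> insert k S \<longrightarrow> H $ j = E $ j" for H
  proof -
    have bound_b: "norm (\<Phi> (vupd H k b)) \<le> Mb b * (\<Prod>j\<in>S. norm (H $ j))" if "b \<in> B" for b
    proof -
      have "norm (\<Phi> (vupd H k b)) \<le> Mb b * (\<Prod>j\<in>S. norm (vupd H k b $ j))"
        using that B HE insert.hyps
        by (intro Mb in_cores_vupd[OF H]) (auto simp: orthonormal_basis_of_def)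
      also have "(\<Prod>j\<in>S. norm (vupd H k b $ j)) = (\<Prod>j\<in>S. norm (H $ j))"
        using insert.hyps by (intro prod.cong) auto
      finally show ?thesis .
    qed
    have "norm (\<Phi> H) \<le> norm (H $ k) * (\<Sum>b\<in>B. norm (\<Phi> (vupd H k b)))"
      using subsp by (intro norm_multilinear_on_le_basis[OF _ ml H B]) blast
    also have "\<dots> \<le> norm (H $ k) * (\<Sum>b\<in>B. Mb b * (\<Prod>j\<in>S. norm (H $ j)))"
      using bound_b by (intro mult_left_mono sum_mono) auto
    also have "\<dots> = (\<Sum>b\<in>B. Mb b) * (\<Prod>j\<in>insert k S. norm (H $ j))"
      using insert.hyps by (simp add: sum_distrib_left sum_distrib_right mult_ac)
    finally show ?thesis .
  qed
  then show ?case using Mb0 by (intro exI[of _ "\<Sum>b\<in>B. Mb b"]) (auto intro: sum_nonneg)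
qed

lemma multilinear_on_bounded:
  fixes V :: "'k::finite \<Rightarrow> 'v::euclidean_space set" and \<Phi> :: "'v ^ 'k \<Rightarrow> 'w::real_normed_vector"
  assumes "\<forall>k. subspace (V k)" "multilinear_on V \<Phi>"
  shows "\<exists>M\<ge>0. \<forall>H. in_cores V H \<longrightarrow> norm (\<Phi> H) \<le> M * (\<Prod>i\<in>UNIV. norm (H $ i))"
  using multilinear_on_bounded_partial[OF assms, of UNIV] by simp

lemma prod_vupd_le:
  fixes X :: "'v::real_normed_vector ^ 'k::finite"
  assumes "\<forall>i. norm (X $ i) \<le> r i" "\<forall>i. 1 \<le> r i"
  shows "(\<Prod>i\<in>UNIV. norm (vupd X j d $ i)) \<le> norm d * (\<Prod>i\<in>UNIV. r i)"
proof -
  have "(\<Prod>i\<in>UNIV. norm (vupd X j d $ i)) = norm d * (\<Prod>i\<in>UNIV - {j}. norm (X $ i))"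
    by (simp add: prod.remove[of UNIV j])
  also have "\<dots> \<le> norm d * (r j * (\<Prod>i\<in>UNIV - {j}. r i))"
  proof (intro mult_left_mono)
    have "(\<Prod>i\<in>UNIV - {j}. norm (X $ i)) \<le> (\<Prod>i\<in>UNIV - {j}. r i)"
      using assms(1) by (intro prod_mono) auto
    also have "\<dots> \<le> r j * (\<Prod>i\<in>UNIV - {j}. r i)"
    proof -
      have "0 \<le> (\<Prod>i\<in>UNIV - {j}. r i)"
        using assms(2) by (intro prod_nonneg) (auto intro: order_trans[OF zero_le_one])
      from mult_right_mono[OF assms(2)[rule_format, of j] this] show ?thesis by simp
    qed
    finally show "(\<Prod>i\<in>UNIV - {j}. norm (X $ i)) \<le> r j * (\<Prod>i\<in>UNIV - {j}. r i)" .
  qed simp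
  also have "\<dots> = norm d * (\<Prod>i\<in>UNIV. r i)"
    by (simp add: prod.remove[of UNIV j])
  finally show ?thesis .
qed

lemma norm_multilinear_on_vupd_le:
  assumes M: "M \<ge> 0" "\<forall>H. in_cores V H \<longrightarrow> norm (\<Phi> H) \<le> M * (\<Prod>i\<in>UNIV. norm (H $ i))"
    and X: "in_cores V X" "\<forall>i. norm (X $ i) \<le> r i" and "\<forall>i. 1 \<le> r i" and "d \<in> V j"
  shows "norm (\<Phi> (vupd X j d)) \<le> M * (\<Prod>i\<in>UNIV. r i) * norm d"
proof -
  have "norm (\<Phi> (vupd X j d)) \<le> M * (\<Prod>i\<in>UNIV. norm (vupd X j d $ i))"
    using M(2) in_cores_vupd[OF X(1) \<open>d \<in> V j\<close>] by blast
  also have "\<dots> \<le> M * (norm d * (\<Prod>i\<in>UNIV. r i))"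
    using prod_vupd_le[OF X(2) \<open>\<forall>i. 1 \<le> r i\<close>] M(1) by (rule mult_left_mono)
  finally show ?thesis by (simp add: mult_ac)
qed

lemma norm_multilinear_on_diff_le_partial:
  fixes V :: "'k::finite \<Rightarrow> 'v::euclidean_space set" and \<Phi> :: "'v ^ 'k \<Rightarrow> 'w::real_normed_vector"
  assumes subsp: "\<forall>k. subspace (V k)" and ml: "multilinear_on V \<Phi>"
    and M: "M \<ge> 0" "\<forall>H. in_cores V H \<longrightarrow> norm (\<Phi> H) \<le> M * (\<Prod>i\<in>UNIV. norm (H $ i))"
    and H: "in_cores V H" "\<forall>i. norm (H $ i) \<le> r i" and r1: "\<forall>i. 1 \<le> r i"
    and "finite S"
  shows "in_cores V H' \<Longrightarrow> \<forall>i. norm (H' $ i) \<le> r i \<Longrightarrow> \<forall>j. j \<notin> S \<longrightarrow> H' $ j = H $ j \<Longrightarrow>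
    norm (\<Phi> H - \<Phi> H') \<le> M * (\<Prod>i\<in>UNIV. r i) * (\<Sum>j\<in>S. norm (H $ j - H' $ j))"
  using \<open>finite S\<close>
proof (induction S arbitrary: H' rule: finite_induct)
  case empty
  then have "H' = H" by (simp add: vec_eq_iff)
  then show ?case by simp
next
  case (insert k S)
  define H'' where "H'' = vupd H' k (H $ k)"
  have Hk: "H $ k \<in> V k" and H'k: "H' $ k \<in> V k"
    using H(1) insert.prems(1) by (auto intro: in_coresD)
  have "norm (\<Phi> H - \<Phi> H'') \<le> M * (\<Prod>i\<in>UNIV. r i) * (\<Sum>j\<in>S. norm (H $ j - H'' $ j))"
    using insert.prems H by (intro insert.IH) (auto simp: H''_def in_cores_vupd Hk)
  also have "(\<Sum>j\<in>S. norm (H $ j - H'' $ j)) = (\<Sum>j\<in>S. norm (H $ j - H' $ j))"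
    using insert.hyps by (intro sum.cong) (auto simp: H''_def)
  finally have IH: "norm (\<Phi> H - \<Phi> H'') \<le> M * (\<Prod>i\<in>UNIV. r i) * (\<Sum>j\<in>S. norm (H $ j - H' $ j))" .
  have "\<Phi> H'' - \<Phi> H' = \<Phi> (vupd H' k (H $ k - H' $ k))"
    using multilinear_on_diff[OF ml insert.prems(1) Hk H'k] by (simp add: H''_def)
  also have "norm \<dots> \<le> M * (\<Prod>i\<in>UNIV. r i) * norm (H $ k - H' $ k)"
    using insert.prems subsp Hk H'k
    by (intro norm_multilinear_on_vupd_le[OF M _ _ r1]) (auto simp: subspace_diff)
  finally have "norm (\<Phi> H'' - \<Phi> H') \<le> M * (\<Prod>i\<in>UNIV. r i) * norm (H $ k - H' $ k)" .
  from norm_diff_triangle_le[OF IH this] show ?case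
    using insert.hyps by (simp add: distrib_left add.commute)
qed

lemma norm_multilinear_on_diff_le:
  fixes V :: "'k::finite \<Rightarrow> 'v::euclidean_space set" and \<Phi> :: "'v ^ 'k \<Rightarrow> 'w::real_normed_vector"
  assumes "\<forall>k. subspace (V k)" "multilinear_on V \<Phi>"
    and "M \<ge> 0" "\<forall>H. in_cores V H \<longrightarrow> norm (\<Phi> H) \<le> M * (\<Prod>i\<in>UNIV. norm (H $ i))"
    and "in_cores V H" "\<forall>i. norm (H $ i) \<le> r i" "in_cores V H'" "\<forall>i. norm (H' $ i) \<le> r i"
    and "\<forall>i. 1 \<le> r i"
  shows "norm (\<Phi> H - \<Phi> H') \<le> M * (\<Prod>i\<in>UNIV. r i) * (\<Sum>j\<in>UNIV. norm (H $ j - H' $ j))"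
  using norm_multilinear_on_diff_le_partial[OF assms(1-6,9) finite_class.finite_UNIV assms(7,8)] by simp

subsection \<open>Empirical moments\<close>

lemma sum_diff_emp_mean: "(\<Sum>k\<in>UNIV. x k - emp_mean x) = 0"
  by (simp add: emp_mean_def sum_subtractf)

lemma emp_cov_eq_sum: "real CARD('k) * emp_cov x y = (\<Sum>k\<in>UNIV. (x k - emp_mean x) * y (k::'k::finite))"
proof -
  have "(\<Sum>k\<in>UNIV. (x k - emp_mean x) * emp_mean y) = 0"
    using sum_diff_emp_mean[of x] by (simp add: sum_distrib_right[symmetric])
  then show ?thesis
    by (simp add: emp_cov_def right_diff_distrib sum_subtractf)
qed

lemma has_real_derivative_sum_sq_dev:
  fixes a :: "'k::finite \<Rightarrow> real \<Rightarrow> real"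
  assumes "\<And>k. (a k has_real_derivative a' k) (at t)"
  shows "((\<lambda>t. \<Sum>k\<in>UNIV. (a k t - emp_mean (\<lambda>i. a i t))\<^sup>2) has_real_derivative
           2 * (\<Sum>k\<in>UNIV. (a k t - emp_mean (\<lambda>i. a i t)) * a' k)) (at t)"
proof -
  define m where "m = emp_mean (\<lambda>i. a i t)"
  have deriv: "((\<lambda>t. \<Sum>k\<in>UNIV. (a k t - emp_mean (\<lambda>i. a i t))\<^sup>2) has_real_derivative
      (\<Sum>k\<in>UNIV. 2 * (a k t - m) * (a' k - emp_mean a'))) (at t)"
    unfolding emp_mean_def m_def
    by (rule DERIV_cong[OF DERIV_sum]) (auto intro!: derivative_eq_intros assms)
  have "(\<Sum>k\<in>UNIV. 2 * (a k t - m) * (a' k - emp_mean a'))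
      = 2 * (\<Sum>k\<in>UNIV. (a k t - m) * a' k) - 2 * (\<Sum>k\<in>UNIV. (a k t - m) * emp_mean a')"
    unfolding sum_distrib_left sum_subtractf[symmetric] by (rule sum.cong) (simp_all add: algebra_simps)
  also have "(\<Sum>k\<in>UNIV. (a k t - m) * emp_mean a') = 0"
    using sum_diff_emp_mean[of "\<lambda>i. a i t"] by (simp add: m_def sum_distrib_right[symmetric])
  finally have "(\<Sum>k\<in>UNIV. 2 * (a k t - m) * (a' k - emp_mean a')) = 2 * (\<Sum>k\<in>UNIV. (a k t - m) * a' k)"
    by simp
  with deriv show ?thesis by (simp add: m_def)
qed

lemma has_real_derivative_norm_dev:
  fixes \<gamma> :: "real \<Rightarrow> 'v::real_inner ^ 'k::finite"
  assumes "(\<gamma> has_vector_derivative v) (at t)"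
  shows "((\<lambda>t. norm_dev (\<gamma> t)) has_real_derivative
           4 * (\<Sum>k\<in>UNIV. ((norm (\<gamma> t $ k))\<^sup>2 - emp_mean (\<lambda>i. (norm (\<gamma> t $ i))\<^sup>2)) * (\<gamma> t $ k \<bullet> v $ k))) (at t)"
proof -
  have "((\<lambda>t. (norm (\<gamma> t $ k))\<^sup>2) has_real_derivative 2 * (\<gamma> t $ k \<bullet> v $ k)) (at t)" for k
  proof -
    have "((\<lambda>t. \<gamma> t $ k) has_vector_derivative v $ k) (at t)"
      using bounded_linear.has_vector_derivative[OF bounded_linear_vec_nth assms] .
    from bounded_bilinear.has_vector_derivative[OF bounded_bilinear_inner this this]
    show ?thesis
      by (simp add: has_real_derivative_iff_has_vector_derivative power2_norm_eq_inner inner_commute)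
  qed
  from has_real_derivative_sum_sq_dev[of "\<lambda>k t. (norm (\<gamma> t $ k))\<^sup>2", OF this]
  show ?thesis
    unfolding norm_dev_def emp_mean_def[symmetric]
    by (simp add: sum_distrib_left mult_ac)
qed

lemma abs_sum_mult_le:
  assumes "\<And>k. k \<in> A \<Longrightarrow> \<bar>y k\<bar> \<le> B"
  shows "\<bar>\<Sum>k\<in>A. x k * y k\<bar> \<le> (\<Sum>k\<in>A. \<bar>x k\<bar>) * (B::real)"
proof -
  have "\<bar>\<Sum>k\<in>A. x k * y k\<bar> \<le> (\<Sum>k\<in>A. \<bar>x k\<bar> * \<bar>y k\<bar>)"
    using sum_abs[of "\<lambda>k. x k * y k" A] by (simp add: abs_mult)
  also have "\<dots> \<le> (\<Sum>k\<in>A. \<bar>x k\<bar> * B)"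
    using assms by (intro sum_mono mult_left_mono) auto
  finally show ?thesis by (simp add: sum_distrib_right)
qed

subsection \<open>Partial gradients and the SAM step\<close>

lemma has_derivative_within_subspace_unique:
  fixes S :: "'v::real_inner set"
  assumes S: "subspace S" and "g1 \<in> S" "g2 \<in> S"
    and d1: "(F has_derivative (\<lambda>h. g1 \<bullet> h)) (at 0 within S)"
    and d2: "(F has_derivative (\<lambda>h. g2 \<bullet> h)) (at 0 within S)"
  shows "g1 = g2"
proof -
  define w where "w = g1 - g2"
  have "w \<in> S" using assms by (simp add: w_def subspace_diff)
  then have line: "range (\<lambda>s::real. s *\<^sub>R w) \<subseteq> S" using S by (auto simp: subspace_scale)
  have p: "((\<lambda>s::real. s *\<^sub>R w) has_derivative (\<lambda>s. s *\<^sub>R w)) (at 0)"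
    by (auto intro!: derivative_eq_intros)
  have "((F \<circ> (\<lambda>s. s *\<^sub>R w)) has_derivative (\<lambda>s. g \<bullet> (s *\<^sub>R w))) (at 0)"
    if "(F has_derivative (\<lambda>h. g \<bullet> h)) (at 0 within S)" for g
  proof -
    have "(F has_derivative (\<lambda>h. g \<bullet> h)) (at (0 *\<^sub>R w) within range (\<lambda>s. s *\<^sub>R w))"
      using has_derivative_subset[OF that line] by simp
    from diff_chain_within[OF p this] show ?thesis by (simp add: o_def)
  qed
  from has_derivative_unique[OF this[OF d1] this[OF d2]] have "g1 \<bullet> w = g2 \<bullet> w"
    by (metis scaleR_one inner_scaleR_right mult_1)
  then have "w \<bullet> w = 0" by (simp add: w_def inner_diff_left)
  then show ?thesis by (simp add: w_def)
qed

lemma pgrad_eqI: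
  assumes "subspace (V k)" "g \<in> V k"
    and "((\<lambda>h. F (vupd G k (G $ k + h))) has_derivative (\<lambda>h. g \<bullet> h)) (at 0 within V k)"
  shows "pgrad V F G k = g"
  unfolding pgrad_def
  using assms has_derivative_within_subspace_unique[OF assms(1)] by (intro the_equality) blast+

lemma sam_u_nonneg: "0 \<le> sam_u V F G"
  by (simp add: sam_u_def sum_nonneg)

text \<open>No hypothesis is needed: if all partial gradients vanish, then \<open>sam_u V F G = 1 / 0 = 0\<close>.\<close>
lemma sam_u_mult_norm_pgrad_le: "sam_u V F G * norm (pgrad V F G k) \<le> 1"
proof -
  define S where "S = (\<Sum>j\<in>UNIV. (norm (pgrad V F G j))\<^sup>2)"
  have "S \<ge> 0" by (simp add: S_def sum_nonneg)
  have "(norm (pgrad V F G k))\<^sup>2 \<le> S"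
    unfolding S_def by (rule member_le_sum) auto
  then have "norm (pgrad V F G k) \<le> sqrt S"
    by (simp add: real_le_rsqrt)
  then show ?thesis
    using \<open>S \<ge> 0\<close> by (cases "S = 0") (auto simp: sam_u_def S_def[symmetric] divide_le_eq_1)
qed

lemma sam_pert_nth: "sam_pert V F \<rho> G $ k = G $ k + (\<rho> * sam_u V F G) *\<^sub>R pgrad V F G k"
  by (simp add: sam_pert_def)

lemma norm_sam_pert_diff_le:
  assumes "0 \<le> \<rho>"
  shows "norm (sam_pert V F \<rho> G $ k - G $ k) \<le> \<rho>"
proof -
  have "norm (sam_pert V F \<rho> G $ k - G $ k) = \<rho> * (sam_u V F G * norm (pgrad V F G k))"
    using assms sam_u_nonneg[of V F G] by (simp add: sam_pert_nth abs_mult)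
  also have "\<dots> \<le> \<rho>"
    using sam_u_mult_norm_pgrad_le sam_u_nonneg[of V F G] assms by (intro mult_right_le_one_le) auto
  finally show ?thesis .
qed

context
  fixes V :: "'k::finite \<Rightarrow> 'v::euclidean_space set" and \<Phi> :: "'v ^ 'k \<Rightarrow> 'w::euclidean_space"
    and f :: "'w \<Rightarrow> real" and gf :: "'w \<Rightarrow> 'w"
  assumes subsp: "\<forall>k. subspace (V k)" and ml: "multilinear_on V \<Phi>"
    and fd: "\<forall>X. (f has_derivative (\<lambda>H. gf X \<bullet> H)) (at X)"
begin

text \<open>Expanding slot \<open>k\<close> in an orthonormal basis of \<open>V k\<close> writes the restriction of
  \<open>h \<mapsto> f (\<Phi> (vupd G k (G $ k + h)))\<close> to \<open>V k\<close> as \<open>f\<close> composed with an affine map on the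
  whole space, to which the chain rule applies.\<close>
lemma pgrad_comp_multilinear:
  assumes G: "in_cores V G"
  shows "pgrad V (f \<circ> \<Phi>) G k \<in> V k"
    and "h \<in> V k \<Longrightarrow> pgrad V (f \<circ> \<Phi>) G k \<bullet> h = gf (\<Phi> G) \<bullet> \<Phi> (vupd G k h)"
proof -
  obtain B where B: "orthonormal_basis_of B (V k)"
    using orthonormal_basis_of_exists subsp by blast
  then have BV: "B \<subseteq> V k" and "finite B" by (auto simp: orthonormal_basis_of_def)
  define A where "A h = (\<Sum>b\<in>B. (b \<bullet> h) *\<^sub>R \<Phi> (vupd G k b))" for h
  define g where "g = (\<Sum>b\<in>B. (gf (\<Phi> G) \<bullet> \<Phi> (vupd G k b)) *\<^sub>R b)"
  have A: "\<Phi> (vupd G k h) = A h" if "h \<in> V k" for h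
    unfolding A_def using multilinear_on_expand[OF _ ml G B that] subsp by blast
  have gV: "g \<in> V k"
    unfolding g_def using BV subsp by (meson subsetD subspace_scale subspace_sum)
  have g_inner: "g \<bullet> h = gf (\<Phi> G) \<bullet> A h" for h
    unfolding g_def A_def by (simp add: inner_sum_left inner_sum_right mult.commute)
  have "linear A"
    unfolding A_def by (simp add: linear_iff inner_add_right scaleR_add_left sum.distrib scaleR_sum_right)
  then have "((\<lambda>h. A h + \<Phi> G) has_derivative A) (at 0)" and "A 0 = 0"
    by (simp_all add: has_derivative_add_const linear_imp_has_derivative linear_0)
  from has_derivative_compose[OF this(1) fd[rule_format]] this(2)
  have "((\<lambda>h. f (A h + \<Phi> G)) has_derivative (\<lambda>h. g \<bullet> h)) (at 0)"
    by (simp add: g_inner)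
  then have "((\<lambda>h. (f \<circ> \<Phi>) (vupd G k (G $ k + h))) has_derivative (\<lambda>h. g \<bullet> h)) (at 0 within V k)"
  proof (rule has_derivative_transform[OF _ _ has_derivative_at_withinI, rotated 2])
    show "0 \<in> V k" using subsp by (simp add: subspace_0)
    show "(f \<circ> \<Phi>) (vupd G k (G $ k + h)) = f (A h + \<Phi> G)" if "h \<in> V k" for h
      using multilinear_on_add[OF ml G in_coresD[OF G] that] A[OF that] by (simp add: add.commute)
  qed
  then have "pgrad V (f \<circ> \<Phi>) G k = g"
    using pgrad_eqI subsp gV by blast
  then show "pgrad V (f \<circ> \<Phi>) G k \<in> V k"
    and "h \<in> V k \<Longrightarrow> pgrad V (f \<circ> \<Phi>) G k \<bullet> h = gf (\<Phi> G) \<bullet> \<Phi> (vupd G k h)"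
    using gV g_inner A by auto
qed

text \<open>Euler's identity: the right-hand side does not depend on \<open>k\<close>.\<close>
lemma inner_pgrad_comp_multilinear_self:
  assumes G: "in_cores V G"
  shows "G $ k \<bullet> pgrad V (f \<circ> \<Phi>) G k = gf (\<Phi> G) \<bullet> \<Phi> G"
  using pgrad_comp_multilinear(2)[OF G in_coresD[OF G]] by (simp add: inner_commute)

lemma inner_pgrad_comp_multilinear_diff_le:
  assumes M: "M \<ge> 0" "\<forall>H. in_cores V H \<longrightarrow> norm (\<Phi> H) \<le> M * (\<Prod>i\<in>UNIV. norm (H $ i))"
    and lip: "\<forall>X Y. norm (gf X - gf Y) \<le> L * norm (X - Y)"
    and G: "in_cores V G" "\<forall>i. norm (G $ i) \<le> r i"
    and G': "in_cores V G'" "\<forall>i. norm (G' $ i) \<le> r i" and r1: "\<forall>i. 1 \<le> r i"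
    and e: "e \<in> V k" "norm e = 1"
  shows "(pgrad V (f \<circ> \<Phi>) G' k - pgrad V (f \<circ> \<Phi>) G k) \<bullet> e
    \<le> (\<bar>L\<bar> * (M * (\<Prod>i\<in>UNIV. r i))\<^sup>2 + norm (gf (\<Phi> G)) * (M * (\<Prod>i\<in>UNIV. r i)))
       * (\<Sum>j\<in>UNIV. norm (G' $ j - G $ j))"
proof -
  define P where "P = M * (\<Prod>i\<in>UNIV. r i)"
  define \<Delta> where "\<Delta> = (\<Sum>j\<in>UNIV. norm (G' $ j - G $ j))"
  define X where "X = \<Phi> (vupd G' k e)"
  define Y where "Y = \<Phi> (vupd G k e)"
  have "P \<ge> 0"
    using M(1) r1 unfolding P_def
    by (intro mult_nonneg_nonneg prod_nonneg) (auto intro: order_trans[OF zero_le_one])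
  have "\<Delta> \<ge> 0" by (simp add: \<Delta>_def sum_nonneg)
  have "norm (gf (\<Phi> G') - gf (\<Phi> G)) \<le> \<bar>L\<bar> * norm (\<Phi> G' - \<Phi> G)"
    using lip by (meson abs_ge_self mult_right_mono norm_ge_zero order_trans)
  also have "\<dots> \<le> \<bar>L\<bar> * (P * \<Delta>)"
    using norm_multilinear_on_diff_le[OF subsp ml M G' G r1]
    by (intro mult_left_mono) (simp_all add: P_def \<Delta>_def)
  finally have gf_diff: "norm (gf (\<Phi> G') - gf (\<Phi> G)) \<le> \<bar>L\<bar> * (P * \<Delta>)" .
  have X: "norm X \<le> P"
    using norm_multilinear_on_vupd_le[OF M G' r1 e(1)] e(2) by (simp add: X_def P_def)
  have "norm (X - Y) \<le> P * (\<Sum>j\<in>UNIV. norm (vupd G' k e $ j - vupd G k e $ j))"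
    unfolding X_def Y_def P_def using G G' e r1
    by (intro norm_multilinear_on_diff_le[OF subsp ml M _ _ _ _ r1]) (auto simp: in_cores_vupd)
  also have "\<dots> \<le> P * \<Delta>"
    unfolding \<Delta>_def using \<open>P \<ge> 0\<close> by (intro mult_left_mono sum_mono) auto
  finally have XY: "norm (X - Y) \<le> P * \<Delta>" .
  have "(pgrad V (f \<circ> \<Phi>) G' k - pgrad V (f \<circ> \<Phi>) G k) \<bullet> e = gf (\<Phi> G') \<bullet> X - gf (\<Phi> G) \<bullet> Y"
    using pgrad_comp_multilinear(2) G(1) G'(1) e(1) by (simp add: inner_diff_left X_def Y_def)
  also have "\<dots> = (gf (\<Phi> G') - gf (\<Phi> G)) \<bullet> X + gf (\<Phi> G) \<bullet> (X - Y)"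
    by (simp add: inner_diff_left inner_diff_right)
  also have "\<dots> \<le> norm (gf (\<Phi> G') - gf (\<Phi> G)) * norm X + norm (gf (\<Phi> G)) * norm (X - Y)"
    by (intro add_mono norm_cauchy_schwarz)
  also have "\<dots> \<le> (\<bar>L\<bar> * (P * \<Delta>)) * P + norm (gf (\<Phi> G)) * (P * \<Delta>)"
    using gf_diff X XY \<open>P \<ge> 0\<close> \<open>\<Delta> \<ge> 0\<close> by (intro add_mono mult_mono mult_left_mono) auto
  also have "\<dots> = (\<bar>L\<bar> * P\<^sup>2 + norm (gf (\<Phi> G)) * P) * \<Delta>"
    by (simp add: power2_eq_square algebra_simps)
  finally show ?thesis by (simp add: P_def \<Delta>_def)
qed

lemma norm_pgrad_comp_multilinear_diff_le:
  assumes M: "M \<ge> 0" "\<forall>H. in_cores V H \<longrightarrow> norm (\<Phi> H) \<le> M * (\<Prod>i\<in>UNIV. norm (H $ i))"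
    and lip: "\<forall>X Y. norm (gf X - gf Y) \<le> L * norm (X - Y)"
    and G: "in_cores V G" "\<forall>i. norm (G $ i) \<le> r i"
    and G': "in_cores V G'" "\<forall>i. norm (G' $ i) \<le> r i" and r1: "\<forall>i. 1 \<le> r i"
  shows "norm (pgrad V (f \<circ> \<Phi>) G' k - pgrad V (f \<circ> \<Phi>) G k)
    \<le> (\<bar>L\<bar> * (M * (\<Prod>i\<in>UNIV. r i))\<^sup>2 + norm (gf (\<Phi> G)) * (M * (\<Prod>i\<in>UNIV. r i)))
       * (\<Sum>j\<in>UNIV. norm (G' $ j - G $ j))"
proof (cases "pgrad V (f \<circ> \<Phi>) G' k = pgrad V (f \<circ> \<Phi>) G k")
  case True
  have "0 \<le> M * (\<Prod>i\<in>UNIV. r i)"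
    using M(1) r1 by (intro mult_nonneg_nonneg prod_nonneg) (auto intro: order_trans[OF zero_le_one])
  with True show ?thesis by (simp add: sum_nonneg)
next
  case False
  define d where "d = pgrad V (f \<circ> \<Phi>) G' k - pgrad V (f \<circ> \<Phi>) G k"
  have "d \<noteq> 0" using False by (simp add: d_def)
  have "d \<in> V k"
    using pgrad_comp_multilinear(1) G(1) G'(1) subsp by (simp add: d_def subspace_diff)
  with \<open>d \<noteq> 0\<close> have "(1 / norm d) *\<^sub>R d \<in> V k" "norm ((1 / norm d) *\<^sub>R d) = 1"
    using subsp by (auto simp: d_def subspace_scale)
  from inner_pgrad_comp_multilinear_diff_le[OF M lip G G' r1 this] \<open>d \<noteq> 0\<close>
  show ?thesis by (simp add: d_def[symmetric] dot_square_norm power2_eq_square)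
qed

lemma in_cores_sam_pert: "in_cores V G \<Longrightarrow> in_cores V (sam_pert V (f \<circ> \<Phi>) \<rho> G)"
  using pgrad_comp_multilinear(1) subsp
  by (simp add: in_cores_def sam_pert_nth subspace_add subspace_scale)

lemma inner_sam_vel:
  fixes \<rho> :: real
  assumes G: "in_cores V G"
  defines "G' \<equiv> sam_pert V (f \<circ> \<Phi>) \<rho> G"
  shows "G $ k \<bullet> sam_vel V (f \<circ> \<Phi>) \<rho> G $ k
    = \<rho> * sam_u V (f \<circ> \<Phi>) G * (pgrad V (f \<circ> \<Phi>) G k \<bullet> pgrad V (f \<circ> \<Phi>) G' k) - gf (\<Phi> G') \<bullet> \<Phi> G'"
proof -
  have "G' $ k \<bullet> pgrad V (f \<circ> \<Phi>) G' k = gf (\<Phi> G') \<bullet> \<Phi> G'"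
    unfolding G'_def by (rule inner_pgrad_comp_multilinear_self[OF in_cores_sam_pert[OF G]])
  then show ?thesis
    unfolding G'_def sam_vel_def by (simp add: sam_pert_nth inner_add_left algebra_simps)
qed

text \<open>\<open>norm (G $ i) + 1\<close> bounds the cores of both \<open>G\<close> and its perturbation, as \<open>\<rho> \<le> 1\<close>.\<close>
lemma norm_pgrad_sam_pert_diff_le:
  fixes \<rho> :: real
  assumes M: "M \<ge> 0" "\<forall>H. in_cores V H \<longrightarrow> norm (\<Phi> H) \<le> M * (\<Prod>i\<in>UNIV. norm (H $ i))"
    and lip: "\<forall>X Y. norm (gf X - gf Y) \<le> L * norm (X - Y)"
    and \<rho>: "0 \<le> \<rho>" "\<rho> \<le> 1" and G: "in_cores V G"
  defines "P \<equiv> M * (\<Prod>i\<in>UNIV. norm (G $ i) + 1)"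
  shows "norm (pgrad V (f \<circ> \<Phi>) (sam_pert V (f \<circ> \<Phi>) \<rho> G) k - pgrad V (f \<circ> \<Phi>) G k)
    \<le> (\<bar>L\<bar> * P\<^sup>2 + norm (gf (\<Phi> G)) * P) * real CARD('k) * \<rho>"
proof -
  define G' where "G' = sam_pert V (f \<circ> \<Phi>) \<rho> G"
  have close: "norm (G' $ i - G $ i) \<le> \<rho>" for i
    using norm_sam_pert_diff_le[OF \<rho>(1)] by (simp add: G'_def)
  have "norm (G' $ i) \<le> norm (G $ i) + 1" for i
    using norm_triangle_sub[of "G' $ i" "G $ i"] close[of i] \<rho>(2) by linarith
  then have "norm (pgrad V (f \<circ> \<Phi>) G' k - pgrad V (f \<circ> \<Phi>) G k)
      \<le> (\<bar>L\<bar> * P\<^sup>2 + norm (gf (\<Phi> G)) * P) * (\<Sum>j\<in>UNIV. norm (G' $ j - G $ j))"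
    unfolding P_def G'_def
    by (intro norm_pgrad_comp_multilinear_diff_le[OF M lip G _ in_cores_sam_pert[OF G]]) auto
  also have "\<dots> \<le> (\<bar>L\<bar> * P\<^sup>2 + norm (gf (\<Phi> G)) * P) * (real CARD('k) * \<rho>)"
  proof (rule mult_left_mono)
    show "(\<Sum>j\<in>UNIV. norm (G' $ j - G $ j)) \<le> real CARD('k) * \<rho>"
      using sum_bounded_above[of UNIV "\<lambda>j. norm (G' $ j - G $ j)" \<rho>] close by simp
    show "0 \<le> \<bar>L\<bar> * P\<^sup>2 + norm (gf (\<Phi> G)) * P"
      unfolding P_def using M(1) by (intro add_nonneg_nonneg mult_nonneg_nonneg prod_nonneg) auto
  qed
  finally show ?thesis by (simp add: G'_def mult_ac)
qed

text \<open>Since the weights \<open>x k - emp_mean x\<close> sum to zero, the \<open>k\<close>-independent Euler term drops out.\<close>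
lemma sum_dev_inner_sam_vel:
  fixes \<rho> :: real
  assumes G: "in_cores V G"
  defines "g \<equiv> pgrad V (f \<circ> \<Phi>) G" and "g' \<equiv> pgrad V (f \<circ> \<Phi>) (sam_pert V (f \<circ> \<Phi>) \<rho> G)"
    and "u \<equiv> sam_u V (f \<circ> \<Phi>) G"
  shows "(\<Sum>k\<in>UNIV. (x k - emp_mean x) * (G $ k \<bullet> sam_vel V (f \<circ> \<Phi>) \<rho> G $ k))
    = (\<Sum>k\<in>UNIV. (x k - emp_mean x) * (\<rho> * u * (g k \<bullet> (g' k - g k))))
      + \<rho> * u * real CARD('k) * emp_cov x (\<lambda>k. (norm (g k))\<^sup>2)"
proof -
  define c where "c = gf (\<Phi> (sam_pert V (f \<circ> \<Phi>) \<rho> G)) \<bullet> \<Phi> (sam_pert V (f \<circ> \<Phi>) \<rho> G)"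
  have vel: "G $ k \<bullet> sam_vel V (f \<circ> \<Phi>) \<rho> G $ k = \<rho> * u * (g k \<bullet> (g' k - g k)) + \<rho> * u * (norm (g k))\<^sup>2 - c" for k
    using inner_sam_vel[OF G]
    by (simp add: g_def g'_def u_def c_def inner_diff_right power2_norm_eq_inner algebra_simps)
  have "(\<Sum>k\<in>UNIV. (x k - emp_mean x) * (G $ k \<bullet> sam_vel V (f \<circ> \<Phi>) \<rho> G $ k))
      = (\<Sum>k\<in>UNIV. (x k - emp_mean x) * (\<rho> * u * (g k \<bullet> (g' k - g k))))
        + \<rho> * u * (\<Sum>k\<in>UNIV. (x k - emp_mean x) * (norm (g k))\<^sup>2)
        - c * (\<Sum>k\<in>UNIV. x k - emp_mean x)"
    unfolding vel by (simp add: algebra_simps sum.distrib sum_subtractf sum_distrib_left sum_distrib_right)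
  then show ?thesis
    by (simp add: sum_diff_emp_mean emp_cov_eq_sum)
qed

lemma sam_norm_dev_rate_error:
  fixes \<rho> :: real
  assumes M: "M \<ge> 0" "\<forall>H. in_cores V H \<longrightarrow> norm (\<Phi> H) \<le> M * (\<Prod>i\<in>UNIV. norm (H $ i))"
    and lip: "\<forall>X Y. norm (gf X - gf Y) \<le> L * norm (X - Y)"
    and \<rho>: "0 \<le> \<rho>" "\<rho> \<le> 1" and G: "in_cores V G"
  defines "a \<equiv> \<lambda>k. (norm (G $ k))\<^sup>2"
    and "P \<equiv> M * (\<Prod>i\<in>UNIV. norm (G $ i) + 1)"
  shows "\<bar>4 * (\<Sum>k\<in>UNIV. (a k - emp_mean a) * (G $ k \<bullet> sam_vel V (f \<circ> \<Phi>) \<rho> G $ k))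
           - 4 * \<rho> * sam_u V (f \<circ> \<Phi>) G * real CARD('k)
             * emp_cov a (\<lambda>k. (norm (pgrad V (f \<circ> \<Phi>) G k))\<^sup>2)\<bar>
         \<le> 4 * (\<Sum>k\<in>UNIV. \<bar>a k - emp_mean a\<bar>)
             * ((\<bar>L\<bar> * P\<^sup>2 + norm (gf (\<Phi> G)) * P) * real CARD('k)) * \<rho>\<^sup>2"
proof -
  define g where "g = pgrad V (f \<circ> \<Phi>) G"
  define g' where "g' = pgrad V (f \<circ> \<Phi>) (sam_pert V (f \<circ> \<Phi>) \<rho> G)"
  define u where "u = sam_u V (f \<circ> \<Phi>) G"
  define C1 where "C1 = (\<bar>L\<bar> * P\<^sup>2 + norm (gf (\<Phi> G)) * P) * real CARD('k)"
  have "\<bar>\<rho> * u * (g k \<bullet> (g' k - g k))\<bar> \<le> \<rho> * (C1 * \<rho>)" for k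
  proof -
    have "\<bar>\<rho> * u * (g k \<bullet> (g' k - g k))\<bar> \<le> \<rho> * ((u * norm (g k)) * norm (g' k - g k))"
      using Cauchy_Schwarz_ineq2[of "g k" "g' k - g k"] \<rho>(1) sam_u_nonneg[of V "f \<circ> \<Phi>" G]
      by (simp add: u_def abs_mult mult_left_mono mult.assoc)
    also have "\<dots> \<le> \<rho> * (1 * (C1 * \<rho>))"
      using sam_u_mult_norm_pgrad_le[of V "f \<circ> \<Phi>" G k] \<rho>(1)
        norm_pgrad_sam_pert_diff_le[OF M lip \<rho> G, of k]
      by (intro mult_left_mono mult_mono) (auto simp: u_def g_def g'_def C1_def P_def)
    finally show ?thesis by simp
  qed
  then have "\<bar>\<Sum>k\<in>UNIV. (a k - emp_mean a) * (\<rho> * u * (g k \<bullet> (g' k - g k)))\<bar>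
      \<le> (\<Sum>k\<in>UNIV. \<bar>a k - emp_mean a\<bar>) * (\<rho> * (C1 * \<rho>))"
    by (rule abs_sum_mult_le)
  then show ?thesis
    unfolding sum_dev_inner_sam_vel[OF G] g_def[symmetric] g'_def[symmetric] u_def[symmetric]
    by (simp add: C1_def power2_eq_square abs_mult mult_ac)
qed

end

theorem theorem3:
  fixes V :: "'k::finite \<Rightarrow> 'v::euclidean_space set"
    and \<Phi> :: "'v ^ 'k \<Rightarrow> 'w::euclidean_space"
  assumes K2: "CARD('k) \<ge> 2"
    and subsp: "\<forall>k. subspace (V k)"
    and ml: "multilinear_on V \<Phi>"
  shows "\<exists>C :: real \<Rightarrow> ('k \<Rightarrow> real) \<Rightarrow> real \<Rightarrow> real.
    \<forall>(L::real) (f::'w \<Rightarrow> real) (gf::'w \<Rightarrow> 'w) (\<gamma>::real \<Rightarrow> 'v ^ 'k) (t0::real) (\<rho>::real).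
      (\<forall>X. (f has_derivative (\<lambda>H. gf X \<bullet> H)) (at X))
      \<and> (\<forall>X Y. norm (gf X - gf Y) \<le> L * norm (X - Y))
      \<and> 0 < \<rho> \<and> \<rho> \<le> 1
      \<and> in_cores V (\<gamma> t0)
      \<and> (\<exists>j. pgrad V (f \<circ> \<Phi>) (\<gamma> t0) j \<noteq> 0)
      \<and> (\<gamma> has_vector_derivative sam_vel V (f \<circ> \<Phi>) \<rho> (\<gamma> t0)) (at t0)
      \<longrightarrow> (\<exists>D. ((\<lambda>t. norm_dev (\<gamma> t)) has_real_derivative D) (at t0)
            \<and> \<bar>D - 4 * \<rho> * sam_u V (f \<circ> \<Phi>) (\<gamma> t0) * real CARD('k)
                   * emp_cov (\<lambda>k. (norm (\<gamma> t0 $ k))\<^sup>2)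
                              (\<lambda>k. (norm (pgrad V (f \<circ> \<Phi>) (\<gamma> t0) k))\<^sup>2)\<bar>
              \<le> C L (\<lambda>k. norm (\<gamma> t0 $ k)) (norm (gf (\<Phi> (\<gamma> t0)))) * \<rho>\<^sup>2)"
proof -
  obtain M where M: "M \<ge> 0" "\<forall>H. in_cores V H \<longrightarrow> norm (\<Phi> H) \<le> M * (\<Prod>i\<in>UNIV. norm (H $ i))"
    using multilinear_on_bounded[OF subsp ml] by blast
  define C :: "real \<Rightarrow> ('k \<Rightarrow> real) \<Rightarrow> real \<Rightarrow> real" where
    "C L n \<beta> = 4 * (\<Sum>k\<in>UNIV. \<bar>(n k)\<^sup>2 - emp_mean (\<lambda>i. (n i)\<^sup>2)\<bar>)
       * ((\<bar>L\<bar> * (M * (\<Prod>i\<in>UNIV. n i + 1))\<^sup>2 + \<beta> * (M * (\<Prod>i\<in>UNIV. n i + 1))) * real CARD('k))"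
    for L n \<beta>
  show ?thesis
  proof (intro exI[of _ C] allI impI, elim conjE)
    fix L f gf \<gamma> t0 \<rho>
    assume fd: "\<forall>X. (f has_derivative (\<lambda>H. gf X \<bullet> H)) (at X)"
      and lip: "\<forall>X Y. norm (gf X - gf Y) \<le> L * norm (X - Y)"
      and \<rho>: "0 < \<rho>" "\<rho> \<le> 1" and G: "in_cores V (\<gamma> t0)"
      and "\<exists>j. pgrad V (f \<circ> \<Phi>) (\<gamma> t0) j \<noteq> 0"
      and \<gamma>': "(\<gamma> has_vector_derivative sam_vel V (f \<circ> \<Phi>) \<rho> (\<gamma> t0)) (at t0)"
    show "\<exists>D. ((\<lambda>t. norm_dev (\<gamma> t)) has_real_derivative D) (at t0)
            \<and> \<bar>D - 4 * \<rho> * sam_u V (f \<circ> \<Phi>) (\<gamma> t0) * real CARD('k)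
                   * emp_cov (\<lambda>k. (norm (\<gamma> t0 $ k))\<^sup>2)
                              (\<lambda>k. (norm (pgrad V (f \<circ> \<Phi>) (\<gamma> t0) k))\<^sup>2)\<bar>
              \<le> C L (\<lambda>k. norm (\<gamma> t0 $ k)) (norm (gf (\<Phi> (\<gamma> t0)))) * \<rho>\<^sup>2"
      using has_real_derivative_norm_dev[OF \<gamma>']
        sam_norm_dev_rate_error[OF subsp ml fd M lip less_imp_le[OF \<rho>(1)] \<rho>(2) G]
      by (auto simp: C_def)
  qed
qed

end
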